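(* Let $(B,\lfloor\cdot,\cdot\rfloor)$ be an SSD space with quadratic form $q$ and let $A\subset B$ be $q$-positive. Then $\mathcal{P}_q(\Phi_A^{@})$ is the smallest $q$-representable subset of $B$ containing $A$.
   Context: An SSD space is a pair $(B,\lfloor\cdot,\cdot\rfloor)$ with $B$ a nonzero real vector space and $\lfloor\cdot,\cdot\rfloor$ a symmetric bilinear form; $q(b)=\frac12\lfloor b,b\rfloor$. $w(B,B)$ is the coarsest topology on $B$ making all maps $b\mapsto\lfloor b,c\rfloor$ continuous. A nonempty $A\subset B$ is $q$-positive if $q(b-c)\ge0$ for all $b,c\in A$. $\Phi_A(x)=\sup_{a\in A}\{\lfloor x,a\rfloor-q(a)\}$. For proper convex $f$, $f^{@}(b)=\sup_{c\in B}\{\lfloor c,b\rfloor-f(c)\}$ and $\mathcal{P}_q(f)=\{b: f(b)=q(b)\}$. A $q$-positive set $A$ is $q$-representable if there is a $w(B,B)$-lower semicontinuous proper convex $f:B\to\mathbb{R}\cup\{+\infty\}$ with $f\ge q$ on $B$ and $\mathcal{P}_q(f)=A$. *)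

theory Defs
  imports "HOL-Analysis.Analysis"
begin

definition sym_bilinear :: "('b::real_vector \<Rightarrow> 'b \<Rightarrow> real) \<Rightarrow> bool" where
  "sym_bilinear s \<longleftrightarrow> (\<forall>x y. s x y = s y x) \<and> (\<forall>c. linear (\<lambda>x. s x c))"

definition SSD_space :: "('b::real_vector \<Rightarrow> 'b \<Rightarrow> real) \<Rightarrow> bool" where
  "SSD_space s \<longleftrightarrow> (\<exists>b::'b. b \<noteq> 0) \<and> sym_bilinear s"

definition qf :: "('b \<Rightarrow> 'b \<Rightarrow> real) \<Rightarrow> 'b \<Rightarrow> real" where
  "qf s b = s b b / 2"

definition wBB :: "('b \<Rightarrow> 'b \<Rightarrow> real) \<Rightarrow> 'b topology" where
  "wBB s = topology_generated_by {(\<lambda>b. s b c) -` U | c U. open U}"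

definition q_positive :: "('b::real_vector \<Rightarrow> 'b \<Rightarrow> real) \<Rightarrow> 'b set \<Rightarrow> bool" where
  "q_positive s A \<longleftrightarrow> A \<noteq> {} \<and> (\<forall>b\<in>A. \<forall>c\<in>A. qf s (b - c) \<ge> 0)"

definition Phi :: "('b \<Rightarrow> 'b \<Rightarrow> real) \<Rightarrow> 'b set \<Rightarrow> 'b \<Rightarrow> ereal" where
  "Phi s A x = (SUP a\<in>A. ereal (s x a - qf s a))"

definition conj_at :: "('b \<Rightarrow> 'b \<Rightarrow> real) \<Rightarrow> ('b \<Rightarrow> ereal) \<Rightarrow> 'b \<Rightarrow> ereal" where
  "conj_at s f b = (SUP c. ereal (s c b) - f c)"

definition Pq :: "('b \<Rightarrow> 'b \<Rightarrow> real) \<Rightarrow> ('b \<Rightarrow> ereal) \<Rightarrow> 'b set" where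
  "Pq s f = {b. f b = ereal (qf s b)}"

definition proper_convex :: "('b::real_vector \<Rightarrow> ereal) \<Rightarrow> bool" where
  "proper_convex f \<longleftrightarrow> (\<forall>x. f x \<noteq> -\<infinity>) \<and> (\<exists>x. f x \<noteq> \<infinity>) \<and>
     (\<forall>x y t. 0 < t \<and> t < 1 \<longrightarrow>
        f (t *\<^sub>R x + (1 - t) *\<^sub>R y) \<le> ereal t * f x + ereal (1 - t) * f y)"

definition lsc_on :: "'b topology \<Rightarrow> ('b \<Rightarrow> ereal) \<Rightarrow> bool" where
  "lsc_on T f \<longleftrightarrow> (\<forall>t::real. closedin T {x \<in> topspace T. f x \<le> ereal t})"

definition q_representable :: "('b::real_vector \<Rightarrow> 'b \<Rightarrow> real) \<Rightarrow> 'b set \<Rightarrow> bool" where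
  "q_representable s A \<longleftrightarrow> q_positive s A \<and>
     (\<exists>f. lsc_on (wBB s) f \<and> proper_convex f \<and> (\<forall>b. f b \<ge> ereal (qf s b)) \<and> Pq s f = A)"

end

theory Submission
  imports Defs
begin

text \<open>
  Let F be the conjugate of \<open>\<Phi>\<^sub>A\<close>. Since \<open>\<Phi>\<^sub>A = q\<close> on A and \<open>\<Phi>\<^sub>A \<le> F\<close>, one gets
  \<open>F \<ge> q\<close> with equality on A; as a supremum of \<open>w(B,B)\<close>-continuous affine functions F is
  convex and \<open>w(B,B)\<close>-lower semicontinuous, and the midpoint inequality for a convex
  majorant of q shows that its contact set is q-positive.

  For minimality let f represent \<open>C \<supseteq> A\<close> and suppose \<open>F b = q b < f b\<close>. A weak
  neighbourhood of b is cut out by finitely many functionals, so a finite-dimensional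
  Hahn-Banach argument (adding one functional at a time, each step a separation in the
  plane) separates the epigraph of f from \<open>(b, q b)\<close> by a functional
  \<open>(x, t) \<mapsto> w t + \<lfloor>x, C\<rfloor>\<close>. Using q-positivity of A this is turned into an affine
  minorant \<open>\<lfloor>\<cdot>, c\<rfloor> - \<beta>\<close> of q on A with \<open>q b < \<lfloor>b, c\<rfloor> - \<beta>\<close>; then
  \<open>\<Phi>\<^sub>A c \<le> \<beta>\<close> and hence \<open>F b > q b\<close>, a contradiction.
\<close>

definition ereal_convex :: "('b::real_vector \<Rightarrow> ereal) \<Rightarrow> bool" where
  "ereal_convex f \<longleftrightarrow> (\<forall>x y t. 0 < t \<and> t < 1 \<longrightarrow>
     f (t *\<^sub>R x + (1 - t) *\<^sub>R y) \<le> ereal t * f x + ereal (1 - t) * f y)"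

lemma proper_convex_iff:
  "proper_convex f \<longleftrightarrow> (\<forall>x. f x \<noteq> -\<infinity>) \<and> (\<exists>x. f x \<noteq> \<infinity>) \<and> ereal_convex f"
  unfolding proper_convex_def ereal_convex_def by blast

lemma ereal_convexD:
  "ereal_convex f \<Longrightarrow> 0 < t \<Longrightarrow> t < 1 \<Longrightarrow>
     f (t *\<^sub>R x + (1 - t) *\<^sub>R y) \<le> ereal t * f x + ereal (1 - t) * f y"
  unfolding ereal_convex_def by blast

lemma convex_epigraph_ereal:
  assumes "ereal_convex f"
  shows "convex {p. f (fst p) \<le> ereal (snd p)}"
  unfolding convex_alt
proof (intro ballI allI impI)
  fix p q :: "'a \<times> real" and u :: real
  assume p: "p \<in> {p. f (fst p) \<le> ereal (snd p)}" and q: "q \<in> {p. f (fst p) \<le> ereal (snd p)}"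
    and u: "0 \<le> u \<and> u \<le> 1"
  show "(1 - u) *\<^sub>R p + u *\<^sub>R q \<in> {p. f (fst p) \<le> ereal (snd p)}"
  proof (cases "u = 0 \<or> u = 1")
    case True
    then show ?thesis using p q by auto
  next
    case False
    then have "0 < 1 - u" "1 - u < 1" using u by auto
    then have "f ((1 - u) *\<^sub>R fst p + u *\<^sub>R fst q) \<le> ereal (1 - u) * f (fst p) + ereal u * f (fst q)"
      using ereal_convexD[OF assms, of "1 - u" "fst p" "fst q"] by simp
    also have "\<dots> \<le> ereal (1 - u) * ereal (snd p) + ereal u * ereal (snd q)"
      using p q u by (intro add_mono ereal_mult_left_mono) auto
    finally show ?thesis by simp
  qed
qed

lemma strip_separation_step:
  fixes L \<phi> :: "'v::real_vector \<Rightarrow> real"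
  assumes "linear L" "linear \<phi>" "convex K" "\<epsilon> > 0"
    and strip: "\<forall>x\<in>K. \<bar>L x\<bar> < \<epsilon> \<longrightarrow> 1 \<le> \<phi> x"
  obtains l m where "\<forall>x\<in>K. 1 \<le> l * L x + m * \<phi> x"
proof (cases "K = {}")
  case True
  then show ?thesis using that by blast
next
  case False
  then obtain x0 where x0: "x0 \<in> K" by blast
  \<comment> \<open>The image of K in the plane, thickened by a box; the strip hypothesis says it misses 0.\<close>
  define S where
    "S = (\<lambda>(x, t, u). (L x + t, \<phi> x + u)) ` (K \<times> {-\<epsilon><..<\<epsilon>} \<times> {-1<..})"
  have "linear (\<lambda>(x, t, u). (L x + t, \<phi> x + u))"
    using assms(1,2) by (auto simp: linear_iff algebra_simps split: prod.splits)
  then have "convex S"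
    unfolding S_def using assms(3) by (intro convex_linear_image convex_Times) auto
  moreover have "(0::real \<times> real) \<notin> S"
  proof
    assume "0 \<in> S"
    then obtain x t u where "x \<in> K" "\<bar>t\<bar> < \<epsilon>" "-1 < u" "L x + t = 0" "\<phi> x + u = 0"
      unfolding S_def by (force simp: zero_prod_def abs_less_iff)
    then show False using strip by force
  qed
  ultimately obtain a1 a2 where a: "(a1, a2) \<noteq> 0"
    and sep: "\<And>x t u. x \<in> K \<Longrightarrow> \<bar>t\<bar> < \<epsilon> \<Longrightarrow> -1 < u \<Longrightarrow> 0 \<le> a1 * (L x + t) + a2 * (\<phi> x + u)"
    using separating_hyperplane_set_0[of S] unfolding S_def by fastforce
  consider "a2 < 0" | "a2 = 0" | "a2 > 0" by linarith
  then show ?thesis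
  proof cases
    case 1
    define c where "c = a1 * L x0 + a2 * \<phi> x0"
    have "0 \<le> c + a2 * ((\<bar>c\<bar> + 1) / - a2)"
      using sep[OF x0, of 0 "(\<bar>c\<bar> + 1) / - a2"] 1 \<open>\<epsilon> > 0\<close>
      by (simp add: c_def algebra_simps zero_less_divide_iff)
    then show ?thesis using 1 by simp
  next
    case 2
    then have "a1 \<noteq> 0" using a by (simp add: zero_prod_def)
    have "1 \<le> (2 * sgn a1 / \<epsilon>) * L x" if "x \<in> K" for x
    proof -
      have "0 \<le> a1 * (L x - sgn a1 * \<epsilon> / 2)"
        using sep[OF that, of "- sgn a1 * \<epsilon> / 2" 0] 2 \<open>\<epsilon> > 0\<close> \<open>a1 \<noteq> 0\<close>
        by (simp add: abs_mult)
      then have "\<epsilon> / 2 \<le> sgn a1 * L x"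
        using \<open>a1 \<noteq> 0\<close> by (cases "a1 > 0") (auto simp: zero_le_mult_iff)
      then show ?thesis using \<open>\<epsilon> > 0\<close> by (simp add: field_simps)
    qed
    then show ?thesis using that[of "2 * sgn a1 / \<epsilon>" 0] by simp
  next
    case 3
    have "1 \<le> (2 * a1 / a2) * L x + 2 * \<phi> x" if "x \<in> K" for x
      using sep[OF that, of 0 "-1/2"] 3 \<open>\<epsilon> > 0\<close> by (simp add: field_simps)
    then show ?thesis using that by blast
  qed
qed

lemma convex_disjoint_box_separation:
  fixes \<L> :: "('v::real_vector \<Rightarrow> real) set"
  assumes linear: "\<forall>L\<in>\<L>. linear L" and "\<L> \<noteq> {}"
    and combination: "\<And>L \<phi> l m. L \<in> \<L> \<Longrightarrow> \<phi> \<in> \<L> \<Longrightarrow> (\<lambda>x. l * L x + m * \<phi> x) \<in> \<L>"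
    and "finite F" "F \<subseteq> \<L>" "convex K" "\<epsilon> > 0"
    and "\<forall>x\<in>K. \<exists>L\<in>F. \<epsilon> \<le> \<bar>L x\<bar>"
  obtains \<phi> where "\<phi> \<in> \<L>" "\<forall>x\<in>K. 1 \<le> \<phi> x"
  using \<open>finite F\<close> \<open>F \<subseteq> \<L>\<close> \<open>convex K\<close> \<open>\<forall>x\<in>K. \<exists>L\<in>F. \<epsilon> \<le> \<bar>L x\<bar>\<close> that
proof (induction F arbitrary: K thesis rule: finite_induct)
  case empty
  then show ?case using \<open>\<L> \<noteq> {}\<close> by blast
next
  case (insert L F)
  have "L \<in> \<L>" "F \<subseteq> \<L>" "convex K" and cover: "\<forall>x\<in>K. \<exists>L'\<in>insert L F. \<epsilon> \<le> \<bar>L' x\<bar>"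
    using insert.prems by auto
  define K' where "K' = K \<inter> L -` {-\<epsilon><..<\<epsilon>}"
  have "linear L" using \<open>L \<in> \<L>\<close> linear by blast
  then have "convex K'"
    unfolding K'_def using \<open>convex K\<close> by (intro convex_Int convex_linear_vimage) auto
  moreover have "\<forall>x\<in>K'. \<exists>L\<in>F. \<epsilon> \<le> \<bar>L x\<bar>"
    using cover unfolding K'_def by force
  ultimately obtain \<phi> where \<phi>: "\<phi> \<in> \<L>" "\<forall>x\<in>K'. 1 \<le> \<phi> x"
    using insert.IH \<open>F \<subseteq> \<L>\<close> by blast
  have "\<forall>x\<in>K. \<bar>L x\<bar> < \<epsilon> \<longrightarrow> 1 \<le> \<phi> x"
    using \<phi>(2) unfolding K'_def by (auto simp: abs_less_iff)
  then obtain l m where "\<forall>x\<in>K. 1 \<le> l * L x + m * \<phi> x"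
    using strip_separation_step[OF \<open>linear L\<close> _ \<open>convex K\<close> \<open>\<epsilon> > 0\<close>] \<phi>(1) linear
    by blast
  moreover have "(\<lambda>x. l * L x + m * \<phi> x) \<in> \<L>"
    using combination \<open>L \<in> \<L>\<close> \<phi>(1) by blast
  ultimately show ?case using insert.prems by blast
qed

lemma topspace_wBB [simp]: "topspace (wBB (s :: 'b::real_vector \<Rightarrow> 'b \<Rightarrow> real)) = UNIV"
  unfolding wBB_def topology_generated_by_topspace
  by (auto intro!: exI[of _ "(\<lambda>b. s b 0) -` UNIV"])

lemma openin_wBB_basic_nbhd:
  assumes "openin (wBB s) U" "x \<in> U"
  obtains F \<epsilon> where "finite F" "\<epsilon> > 0" "{y. \<forall>c\<in>F. \<bar>s y c - s x c\<bar> < \<epsilon>} \<subseteq> U"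
proof -
  define nbhd where "nbhd x F \<epsilon> = {y. \<forall>c\<in>F. \<bar>s y c - s x c\<bar> < \<epsilon>}" for x F \<epsilon>
  have "generate_topology_on {(\<lambda>b. s b c) -` V | c V. open V} U"
    using assms(1) unfolding wBB_def by (simp add: openin_topology_generated_by_iff)
  then have "\<forall>x\<in>U. \<exists>F \<epsilon>. finite F \<and> \<epsilon> > 0 \<and> nbhd x F \<epsilon> \<subseteq> U"
  proof (induction rule: generate_topology_on.induct)
    case Empty
    then show ?case by simp
  next
    case (Int U1 U2)
    show ?case
    proof
      fix x assume x: "x \<in> U1 \<inter> U2"
      obtain F1 \<epsilon>1 where "finite F1" "\<epsilon>1 > 0" "nbhd x F1 \<epsilon>1 \<subseteq> U1"
        using Int.IH(1) x by blast
      moreover obtain F2 \<epsilon>2 where "finite F2" "\<epsilon>2 > 0" "nbhd x F2 \<epsilon>2 \<subseteq> U2"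
        using Int.IH(2) x by blast
      ultimately show "\<exists>F \<epsilon>. finite F \<and> \<epsilon> > 0 \<and> nbhd x F \<epsilon> \<subseteq> U1 \<inter> U2"
        by (intro exI[of _ "F1 \<union> F2"] exI[of _ "min \<epsilon>1 \<epsilon>2"]) (auto simp: nbhd_def)
    qed
  next
    case (UN K)
    show ?case
    proof
      fix x assume "x \<in> \<Union>K"
      then obtain k where k: "k \<in> K" "x \<in> k" by blast
      then obtain F \<epsilon> where "finite F" "\<epsilon> > 0" "nbhd x F \<epsilon> \<subseteq> k"
        using UN.IH by blast
      then show "\<exists>F \<epsilon>. finite F \<and> \<epsilon> > 0 \<and> nbhd x F \<epsilon> \<subseteq> \<Union>K"
        using k(1) by blast
    qed
  next
    case (Basis W)
    then obtain c V where W: "W = (\<lambda>b. s b c) -` V" "open V" by blast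
    show ?case
    proof
      fix x assume "x \<in> W"
      then obtain \<epsilon> where "\<epsilon> > 0" "\<forall>r. \<bar>r - s x c\<bar> < \<epsilon> \<longrightarrow> r \<in> V"
        using W open_dist[of V] by (auto simp: dist_real_def)
      then show "\<exists>F \<epsilon>. finite F \<and> \<epsilon> > 0 \<and> nbhd x F \<epsilon> \<subseteq> W"
        using W by (intro exI[of _ "{c}"] exI[of _ \<epsilon>]) (auto simp: nbhd_def)
    qed
  qed
  then show ?thesis using assms(2) that unfolding nbhd_def by blast
qed

locale ssd_form =
  fixes s :: "'b::real_vector \<Rightarrow> 'b \<Rightarrow> real"
  assumes sym_bilinear: "sym_bilinear s"
begin

lemma symmetric: "s x y = s y x"
  using sym_bilinear unfolding sym_bilinear_def by blast

lemma bilinear: "bilinear s"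
  unfolding bilinear_def
proof (intro conjI allI)
  fix c
  show linear_left: "linear (\<lambda>x. s x c)"
    using sym_bilinear unfolding sym_bilinear_def by blast
  have "s c = (\<lambda>y. s y c)"
    by (rule ext) (rule symmetric)
  then show "linear (\<lambda>y. s c y)"
    using linear_left by simp
qed

lemmas form_simps = bilinear_ladd[OF bilinear] bilinear_radd[OF bilinear]
  bilinear_lsub[OF bilinear] bilinear_rsub[OF bilinear]
  bilinear_lmul[OF bilinear] bilinear_rmul[OF bilinear]
  bilinear_lzero[OF bilinear] bilinear_rzero[OF bilinear]
  bilinear_lneg[OF bilinear] bilinear_rneg[OF bilinear]

lemma qf_diff: "qf s (x - y) = qf s x + qf s y - s x y"
  unfolding qf_def
  by (simp add: bilinear_lsub[OF bilinear] bilinear_rsub[OF bilinear] symmetric[of y x] field_simps)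

lemma conj_at_lower: "ereal (s c b) - g c \<le> conj_at s g b"
  unfolding conj_at_def by (rule SUP_upper) simp

lemma ereal_convex_conj_at: "ereal_convex (conj_at s g)"
  unfolding ereal_convex_def
proof (intro allI impI, elim conjE)
  fix x y and t :: real
  assume t: "0 < t" "t < 1"
  let ?F = "conj_at s g"
  show "?F (t *\<^sub>R x + (1 - t) *\<^sub>R y) \<le> ereal t * ?F x + ereal (1 - t) * ?F y"
    unfolding conj_at_def[of s g "t *\<^sub>R x + (1 - t) *\<^sub>R y"]
  proof (rule SUP_least)
    fix c
    show "ereal (s c (t *\<^sub>R x + (1 - t) *\<^sub>R y)) - g c \<le> ereal t * ?F x + ereal (1 - t) * ?F y"
    proof (cases "g c")
      case (real p)
      then have "ereal (s c (t *\<^sub>R x + (1 - t) *\<^sub>R y)) - g c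
          = ereal t * ereal (s c x - p) + ereal (1 - t) * ereal (s c y - p)"
        by (simp add: form_simps algebra_simps)
      also have "\<dots> \<le> ereal t * ?F x + ereal (1 - t) * ?F y"
        using conj_at_lower[of c x g] conj_at_lower[of c y g] t real
        by (intro add_mono ereal_mult_left_mono) auto
      finally show ?thesis .
    next
      case PInf
      then show ?thesis by simp
    next
      case MInf
      then have "?F x = \<infinity>" "?F y = \<infinity>"
        using conj_at_lower[of c x g] conj_at_lower[of c y g] by auto
      then show ?thesis using t by simp
    qed
  qed
qed

lemma lsc_conj_at: "lsc_on (wBB s) (conj_at s g)"
  unfolding lsc_on_def closedin_def topspace_wBB
proof (intro allI conjI)
  fix t :: real
  define G where "G c = {x. ereal t < ereal (s c x) - g c}" for c
  have "openin (wBB s) (G c)" for c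
  proof (cases "g c")
    case (real p)
    then have "G c = (\<lambda>b. s b c) -` {t + p<..}"
      unfolding G_def by (auto simp: symmetric[of c])
    then show ?thesis
      unfolding wBB_def
      by (auto intro!: topology_generated_by_Basis exI[of _ c] exI[of _ "{t + p<..}"])
  next
    case PInf
    then show ?thesis by (simp add: G_def)
  next
    case MInf
    then have "G c = topspace (wBB s)" by (simp add: G_def)
    then show ?thesis by (metis openin_topspace)
  qed
  moreover have "\<not> conj_at s g x \<le> ereal t \<longleftrightarrow> (\<exists>c. x \<in> G c)" for x
    unfolding G_def conj_at_def not_le less_SUP_iff by simp
  then have "UNIV - {x \<in> UNIV. conj_at s g x \<le> ereal t} = (\<Union>c. G c)"
    by blast
  ultimately show "openin (wBB s) (UNIV - {x \<in> UNIV. conj_at s g x \<le> ereal t})"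
    by auto
qed auto

lemma qf_diff_nonneg_on_Pq:
  assumes "ereal_convex f" "\<forall>b. ereal (qf s b) \<le> f b" "b1 \<in> Pq s f" "b2 \<in> Pq s f"
  shows "0 \<le> qf s (b1 - b2)"
proof -
  define m where "m = (1/2) *\<^sub>R b1 + (1 - 1/2) *\<^sub>R b2"
  have "ereal (qf s m) \<le> f m" using assms(2) by blast
  also have "\<dots> \<le> ereal (1/2) * f b1 + ereal (1 - 1/2) * f b2"
    unfolding m_def by (rule ereal_convexD[OF assms(1)]) auto
  also have "\<dots> = ereal ((qf s b1 + qf s b2) / 2)"
    using assms(3,4) by (simp add: Pq_def)
  finally have "qf s m \<le> (qf s b1 + qf s b2) / 2" by simp
  moreover have "qf s (b1 - b2) = 2 * qf s b1 + 2 * qf s b2 - 4 * qf s m"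
    unfolding qf_def m_def by (simp add: form_simps symmetric[of b2 b1] field_simps)
  ultimately show ?thesis by argo
qed

definition product_functionals :: "('b \<times> real \<Rightarrow> real) set" where
  "product_functionals = {(\<lambda>p. w * snd p + s (fst p) C) | w C. True}"

lemma linear_product_functionals: "\<forall>L\<in>product_functionals. linear L"
  unfolding product_functionals_def by (auto simp: linear_iff form_simps algebra_simps)

lemma product_functionals_combination:
  assumes "L \<in> product_functionals" "\<phi> \<in> product_functionals"
  shows "(\<lambda>p. l * L p + m * \<phi> p) \<in> product_functionals"
proof -
  obtain w1 C1 w2 C2 where
    "L = (\<lambda>p. w1 * snd p + s (fst p) C1)" "\<phi> = (\<lambda>p. w2 * snd p + s (fst p) C2)"
    using assms unfolding product_functionals_def by blast
  then have "(\<lambda>p. l * L p + m * \<phi> p)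
      = (\<lambda>p. (l * w1 + m * w2) * snd p + s (fst p) (l *\<^sub>R C1 + m *\<^sub>R C2))"
    by (auto simp: form_simps algebra_simps)
  then show ?thesis unfolding product_functionals_def by blast
qed

lemma snd_product_functionals: "snd \<in> product_functionals"
proof -
  have "snd = (\<lambda>p. 1 * snd p + s (fst p) 0)"
    by (simp add: form_simps)
  then show ?thesis unfolding product_functionals_def by blast
qed

lemma form_product_functionals: "(\<lambda>p. s (fst p) c) \<in> product_functionals"
proof -
  have "(\<lambda>p. s (fst p) c) = (\<lambda>p. 0 * snd p + s (fst p) c)"
    by simp
  then show ?thesis unfolding product_functionals_def by blast
qed

lemma epigraph_separation:
  assumes "ereal_convex f" "lsc_on (wBB s) f" "ereal r < f b"
  obtains w C where "\<forall>x t. f x \<le> ereal t \<longrightarrow> 1 \<le> w * (t - r) + s (x - b) C"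
proof -
  obtain r0 where r0: "r < r0" "ereal r0 < f b"
    using ereal_dense2[OF assms(3)] by auto
  have "openin (wBB s) (UNIV - {x. f x \<le> ereal r0})"
    using assms(2) unfolding lsc_on_def closedin_def by simp
  moreover have "b \<in> UNIV - {x. f x \<le> ereal r0}"
    using r0(2) by (simp add: not_le)
  ultimately obtain F \<epsilon> where "finite F" "\<epsilon> > 0"
    and "{y. \<forall>c\<in>F. \<bar>s y c - s b c\<bar> < \<epsilon>} \<subseteq> UNIV - {x. f x \<le> ereal r0}"
    by (rule openin_wBB_basic_nbhd)
  then have nbhd: "ereal r0 < f y" if "\<forall>c\<in>F. \<bar>s y c - s b c\<bar> < \<epsilon>" for y
    using that by (auto simp: not_le)
  define K where "K = (\<lambda>p. p - (b, r)) ` {p. f (fst p) \<le> ereal (snd p)}"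
  have "convex K"
    unfolding K_def by (intro convex_translation_subtract convex_epigraph_ereal assms(1))
  define \<delta> where "\<delta> = min \<epsilon> (r0 - r)"
  have "\<delta> > 0" using \<open>\<epsilon> > 0\<close> r0(1) by (simp add: \<delta>_def)
  have box: "\<forall>p\<in>K. \<exists>L\<in>insert snd ((\<lambda>c p. s (fst p) c) ` F). \<delta> \<le> \<bar>L p\<bar>"
  proof
    fix p assume "p \<in> K"
    then obtain x t where p: "p = (x - b, t - r)" and "f x \<le> ereal t"
      unfolding K_def by auto
    show "\<exists>L\<in>insert snd ((\<lambda>c p. s (fst p) c) ` F). \<delta> \<le> \<bar>L p\<bar>"
    proof (cases "\<forall>c\<in>F. \<bar>s (x - b) c\<bar> < \<delta>")
      case True
      then have "\<forall>c\<in>F. \<bar>s x c - s b c\<bar> < \<epsilon>"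
        by (simp add: bilinear_lsub[OF bilinear] \<delta>_def)
      then have "ereal r0 < f x"
        by (rule nbhd)
      then have "ereal r0 < ereal t"
        using \<open>f x \<le> ereal t\<close> by (rule less_le_trans)
      then have "\<delta> \<le> snd p"
        using p by (simp add: \<delta>_def)
      then show ?thesis by auto
    next
      case False
      then show ?thesis using p by (auto simp: not_less)
    qed
  qed
  obtain \<phi> where "\<phi> \<in> product_functionals" and "\<forall>p\<in>K. 1 \<le> \<phi> p"
    using convex_disjoint_box_separation[OF linear_product_functionals _
        product_functionals_combination _ _ \<open>convex K\<close> \<open>\<delta> > 0\<close> box]
      snd_product_functionals form_product_functionals \<open>finite F\<close> by blast
  then obtain w C where "\<forall>p\<in>K. 1 \<le> w * snd p + s (fst p) C"
    unfolding product_functionals_def by blast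
  moreover have "(x - b, t - r) \<in> K" if "f x \<le> ereal t" for x t
    unfolding K_def using that by (auto intro!: image_eqI[of _ _ "(x, t)"])
  ultimately show ?thesis using that by force
qed

lemma affine_minorant_from_separation:
  assumes "q_positive s A"
    and sep: "\<And>a t. a \<in> A \<Longrightarrow> qf s a \<le> t \<Longrightarrow> 1 \<le> w * (t - qf s b) + s (a - b) C"
  obtains c \<beta> where "\<forall>a\<in>A. s a c - \<beta> \<le> qf s a" "qf s b < s b c - \<beta>"
proof -
  obtain a0 where a0: "a0 \<in> A" using assms(1) unfolding q_positive_def by blast
  consider "w < 0" | "w > 0" | "w = 0" by linarith
  then show ?thesis
  proof cases
    case 1
    define X where "X = s (a0 - b) C"
    define t where "t = max (qf s a0) (qf s b + X / - w)"
    have "1 \<le> w * (t - qf s b) + X" using sep[OF a0, of t] unfolding t_def X_def by simp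
    moreover have "w * (t - qf s b) \<le> w * (X / - w)"
      by (rule mult_left_mono_neg) (use 1 in \<open>auto simp: t_def\<close>)
    ultimately show ?thesis using 1 by simp
  next
    case 2
    define c where "c = - (1 / w) *\<^sub>R C"
    define \<beta> where "\<beta> = - (qf s b + 1 / w + s b C / w)"
    have minorant_at: "s x c - \<beta> = qf s b + (1 - s (x - b) C) / w" for x
      unfolding c_def \<beta>_def using 2 by (simp add: form_simps field_simps)
    have "s a c - \<beta> \<le> qf s a" if "a \<in> A" for a
      using sep[OF that order_refl] 2 unfolding minorant_at by (simp add: field_simps)
    moreover have "qf s b < s b c - \<beta>"
      unfolding minorant_at using 2 by (simp add: form_simps)
    ultimately show ?thesis using that by blast
  next
    case 3
    \<comment> \<open>Tilt the minorant \<open>a \<mapsto> s a a0 - qf s a0\<close> of qf on A, exact at a0, along C.\<close>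
    define T where "T = max 0 (qf s b - s b a0 + qf s a0 + 1)"
    define c where "c = a0 - T *\<^sub>R C"
    define \<beta> where "\<beta> = qf s a0 - T * (s b C + 1)"
    have minorant_at: "s x c - \<beta> = (s x a0 - qf s a0) + T * (1 - s (x - b) C)" for x
      unfolding c_def \<beta>_def by (simp add: form_simps algebra_simps)
    have "s a c - \<beta> \<le> qf s a" if "a \<in> A" for a
    proof -
      have "T * (1 - s (a - b) C) \<le> 0"
        using sep[OF that order_refl] 3 by (simp add: T_def mult_nonneg_nonpos)
      moreover have "0 \<le> qf s (a - a0)"
        using assms(1) that a0 unfolding q_positive_def by blast
      ultimately show ?thesis unfolding minorant_at qf_diff by linarith
    qed
    moreover have "qf s b < s b c - \<beta>"
      unfolding minorant_at by (simp add: form_simps T_def)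
    ultimately show ?thesis using that by blast
  qed
qed

end

locale q_positive_set = ssd_form s for s :: "'b::real_vector \<Rightarrow> 'b \<Rightarrow> real" +
  fixes A :: "'b set"
  assumes q_positive: "q_positive s A"
begin

lemma nonempty: "A \<noteq> {}"
  using q_positive unfolding q_positive_def by blast

lemma Phi_lower: "a \<in> A \<Longrightarrow> ereal (s c a - qf s a) \<le> Phi s A c"
  unfolding Phi_def by (rule SUP_upper)

lemma Phi_eq_qf: "a \<in> A \<Longrightarrow> Phi s A a = ereal (qf s a)"
proof (rule antisym)
  assume a: "a \<in> A"
  show "Phi s A a \<le> ereal (qf s a)"
    unfolding Phi_def
  proof (rule SUP_least)
    fix a' assume "a' \<in> A"
    then have "0 \<le> qf s (a - a')"
      using q_positive a unfolding q_positive_def by blast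
    then show "ereal (s a a' - qf s a') \<le> ereal (qf s a)"
      by (simp add: qf_diff)
  qed
  show "ereal (qf s a) \<le> Phi s A a"
    using Phi_lower[OF a, of a] by (simp add: qf_def)
qed

lemma Phi_le_conj_at_Phi: "Phi s A b \<le> conj_at s (Phi s A) b"
  unfolding Phi_def[of s A b]
proof (rule SUP_least)
  fix a assume "a \<in> A"
  then have "ereal (s b a - qf s a) = ereal (s a b) - Phi s A a"
    by (simp add: Phi_eq_qf symmetric[of a b])
  then show "ereal (s b a - qf s a) \<le> conj_at s (Phi s A) b"
    using conj_at_lower[of a b "Phi s A"] by simp
qed

lemma qf_le_conj_at_Phi: "ereal (qf s b) \<le> conj_at s (Phi s A) b"
proof (cases "Phi s A b \<le> ereal (qf s b)")
  case True
  obtain a where "a \<in> A" using nonempty by blast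
  then have "Phi s A b \<noteq> -\<infinity>"
    using Phi_lower[of a b] by auto
  with True obtain p where p: "Phi s A b = ereal p" "p \<le> qf s b"
    by (cases "Phi s A b") auto
  then have "ereal (qf s b) \<le> ereal (s b b) - Phi s A b"
    by (simp add: qf_def)
  then show ?thesis
    using conj_at_lower[of b b "Phi s A"] by simp
next
  case False
  then show ?thesis
    using Phi_le_conj_at_Phi[of b] by simp
qed

lemma conj_at_Phi_eq_qf: "a \<in> A \<Longrightarrow> conj_at s (Phi s A) a = ereal (qf s a)"
proof (rule antisym)
  assume a: "a \<in> A"
  show "conj_at s (Phi s A) a \<le> ereal (qf s a)"
    unfolding conj_at_def
  proof (rule SUP_least)
    fix c
    have "ereal (s c a) - Phi s A c \<le> ereal (s c a) - ereal (s c a - qf s a)"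
      using Phi_lower[OF a] by (rule ereal_minus_mono[OF order_refl])
    then show "ereal (s c a) - Phi s A c \<le> ereal (qf s a)"
      by simp
  qed
qed (rule qf_le_conj_at_Phi)

lemma A_subset_Pq_conj_at_Phi: "A \<subseteq> Pq s (conj_at s (Phi s A))"
  using conj_at_Phi_eq_qf unfolding Pq_def by blast

lemma proper_convex_conj_at_Phi: "proper_convex (conj_at s (Phi s A))"
proof -
  obtain a where "a \<in> A" using nonempty by blast
  then have "conj_at s (Phi s A) a \<noteq> \<infinity>"
    by (simp add: conj_at_Phi_eq_qf)
  moreover have "conj_at s (Phi s A) x \<noteq> -\<infinity>" for x
    using qf_le_conj_at_Phi[of x] by auto
  ultimately show ?thesis
    unfolding proper_convex_iff using ereal_convex_conj_at by blast
qed

lemma q_representable_Pq_conj_at_Phi: "q_representable s (Pq s (conj_at s (Phi s A)))"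
proof -
  have "q_positive s (Pq s (conj_at s (Phi s A)))"
    unfolding q_positive_def
    using A_subset_Pq_conj_at_Phi nonempty qf_le_conj_at_Phi
      qf_diff_nonneg_on_Pq[OF ereal_convex_conj_at]
    by blast
  then show ?thesis
    unfolding q_representable_def
    using lsc_conj_at proper_convex_conj_at_Phi qf_le_conj_at_Phi by blast
qed

lemma Pq_conj_at_Phi_subset:
  assumes "ereal_convex f" "lsc_on (wBB s) f" "\<forall>b. ereal (qf s b) \<le> f b" "A \<subseteq> Pq s f"
  shows "Pq s (conj_at s (Phi s A)) \<subseteq> Pq s f"
proof
  fix b assume b: "b \<in> Pq s (conj_at s (Phi s A))"
  show "b \<in> Pq s f"
  proof (rule ccontr)
    assume "b \<notin> Pq s f"
    then have "ereal (qf s b) < f b"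
      using assms(3) unfolding Pq_def by (simp add: order_less_le)
    then obtain w C where sep: "\<forall>x t. f x \<le> ereal t \<longrightarrow> 1 \<le> w * (t - qf s b) + s (x - b) C"
      by (rule epigraph_separation[OF assms(1,2)])
    have "1 \<le> w * (t - qf s b) + s (a - b) C" if "a \<in> A" "qf s a \<le> t" for a t
    proof (rule sep[rule_format])
      show "f a \<le> ereal t"
        using assms(4) that unfolding Pq_def by auto
    qed
    then obtain c \<beta> where c: "\<forall>a\<in>A. s a c - \<beta> \<le> qf s a" and "qf s b < s b c - \<beta>"
      by (rule affine_minorant_from_separation[OF q_positive])
    have "Phi s A c \<le> ereal \<beta>"
      unfolding Phi_def
    proof (rule SUP_least)
      fix a assume "a \<in> A"
      then have "s a c - \<beta> \<le> qf s a"
        using c by blast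
      then show "ereal (s c a - qf s a) \<le> ereal \<beta>"
        by (simp add: symmetric[of c])
    qed
    then have "ereal (s c b) - ereal \<beta> \<le> ereal (s c b) - Phi s A c"
      by (rule ereal_minus_mono[OF order_refl])
    also have "\<dots> \<le> conj_at s (Phi s A) b"
      by (rule conj_at_lower)
    also have "\<dots> = ereal (qf s b)"
      using b unfolding Pq_def by simp
    finally show False
      using \<open>qf s b < s b c - \<beta>\<close> by (simp add: symmetric[of c])
  qed
qed

lemma Pq_conj_at_Phi_minimal:
  assumes "q_representable s C" "A \<subseteq> C"
  shows "Pq s (conj_at s (Phi s A)) \<subseteq> C"
proof -
  obtain f where "lsc_on (wBB s) f" "proper_convex f" "\<forall>b. ereal (qf s b) \<le> f b" "Pq s f = C"
    using assms(1) unfolding q_representable_def by blast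
  then show ?thesis
    using Pq_conj_at_Phi_subset assms(2) unfolding proper_convex_iff by blast
qed

end

theorem mainTheorem8:
  fixes s :: "'b::real_vector \<Rightarrow> 'b \<Rightarrow> real" and A :: "'b set"
  assumes "SSD_space s"
    and "q_positive s A"
  shows "q_representable s (Pq s (conj_at s (Phi s A)))
       \<and> A \<subseteq> Pq s (conj_at s (Phi s A))
       \<and> (\<forall>C. q_representable s C \<and> A \<subseteq> C \<longrightarrow> Pq s (conj_at s (Phi s A)) \<subseteq> C)"
proof -
  interpret q_positive_set s A
    using assms by unfold_locales (simp_all add: SSD_space_def)
  show ?thesis
    using q_representable_Pq_conj_at_Phi A_subset_Pq_conj_at_Phi Pq_conj_at_Phi_minimal by blast
qed

end
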